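(* Assume that $-L$ is positive, i.e. $-\lambda_\xi\ge0$ for all $\xi\in\mathcal I$, and let $0<r\le1$. Then $(I-L)^{-s/m}\in S_r(L^2(M))$ for every $s>\frac{s_0}{r}$.
   Context: Setting. $M$ is a compact manifold with boundary, interior $\mathring M$, positive measure $dx$. $L$ is a pseudo-differential operator of order $m$ on $\mathring M$ with fixed boundary conditions (BC); $L^*$ its adjoint with adjoint boundary conditions. There are a countable index set $\mathcal I$, $\lambda_\xi\in\mathbb C$, $u_\xi,v_\xi\in L^2(M)$ with $Lu_\xi=\lambda_\xi u_\xi$ ($u_\xi$ satisfying (BC)), $L^*v_\xi=\overline{\lambda_\xi}v_\xi$, $\|u_\xi\|_{L^2}=\|v_\xi\|_{L^2}=1$, $(u_\xi,v_\eta)_{L^2}=\delta_{\xi\eta}$, and $\{u_\xi\}$ a basis of $L^2(M)$. Put $\langle\xi\rangle=(1+|\lambda_\xi|^2)^{1/(2m)}$; $s_0\in\mathbb R$ is a number with $\sum_{\xi\in\mathcal I}\langle\xi\rangle^{-s_0}<\infty$ (assumed to exist). WZ-condition: $u_\xi,v_\xi$ zero-free on $M$ with $\inf_M|u_\xi|,\inf_M|v_\xi|\ge C\langle\xi\rangle^{-N}$ as $\langle\xi\rangle\to\infty$. $C_L^\infty(M)=\bigcap_k\mathrm{Dom}(L^k)$, and $\widehat f(\xi)=\int_M f\overline{v_\xi}\,dx$. The operator $(I-L)^{-s/m}$ is the $L$-Fourier multiplier with symbol $(1-\lambda_\xi)^{-s/m}$, i.e. $(I-L)^{-s/m}f=\sum_\xi(1-\lambda_\xi)^{-s/m}\widehat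 f(\xi)u_\xi$. $S_r(L^2(M))$ denotes the Schatten class of index $r$. *)

theory Defs
  imports "HOL-Analysis.Analysis"
begin

text \<open>The Hilbert space L^2(M) of a measure space M, realised on
  representatives: square-integrable complex functions, with equality
  understood almost everywhere (i.e. L2-norm of the difference is 0).\<close>

definition L2 :: "'a measure \<Rightarrow> ('a \<Rightarrow> complex) set" where
  "L2 M = {f. f \<in> borel_measurable M \<and> integrable M (\<lambda>x. (cmod (f x))\<^sup>2)}"

definition L2_norm :: "'a measure \<Rightarrow> ('a \<Rightarrow> complex) \<Rightarrow> real" where
  "L2_norm M f = sqrt (\<integral>x. (cmod (f x))\<^sup>2 \<partial>M)"

definition L2_inner :: "'a measure \<Rightarrow> ('a \<Rightarrow> complex) \<Rightarrow> ('a \<Rightarrow> complex) \<Rightarrow> complex" where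
  "L2_inner M f g = (\<integral>x. f x * cnj (g x) \<partial>M)"

definition L_fourier :: "'a measure \<Rightarrow> ('i \<Rightarrow> 'a \<Rightarrow> complex) \<Rightarrow> ('a \<Rightarrow> complex) \<Rightarrow> 'i \<Rightarrow> complex" where
  "L_fourier M v f \<xi> = L2_inner M f (v \<xi>)"

definition partial_series :: "nat set \<Rightarrow> (nat \<Rightarrow> 'a \<Rightarrow> complex) \<Rightarrow> nat \<Rightarrow> 'a \<Rightarrow> complex" where
  "partial_series I g n = (\<lambda>x. \<Sum>\<xi>\<in>I \<inter> {..<n}. g \<xi> x)"

definition is_L2_basis :: "'a measure \<Rightarrow> nat set \<Rightarrow> (nat \<Rightarrow> 'a \<Rightarrow> complex) \<Rightarrow> bool" where
  "is_L2_basis M I u \<longleftrightarrow>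
     (\<forall>f\<in>L2 M. \<exists>c. (\<forall>\<xi>. \<xi> \<notin> I \<longrightarrow> c \<xi> = 0) \<and>
        (\<lambda>n. L2_norm M (\<lambda>x. f x - partial_series I (\<lambda>\<xi> y. c \<xi> * u \<xi> y) n x)) \<longlonglongrightarrow> 0 \<and>
        (\<forall>d. (\<forall>\<xi>. \<xi> \<notin> I \<longrightarrow> d \<xi> = 0) \<and>
             (\<lambda>n. L2_norm M (\<lambda>x. f x - partial_series I (\<lambda>\<xi> y. d \<xi> * u \<xi> y) n x)) \<longlonglongrightarrow> 0
             \<longrightarrow> d = c))"

definition is_L_multiplier ::
  "'a measure \<Rightarrow> nat set \<Rightarrow> (nat \<Rightarrow> 'a \<Rightarrow> complex) \<Rightarrow> (nat \<Rightarrow> 'a \<Rightarrow> complex)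
     \<Rightarrow> (nat \<Rightarrow> complex) \<Rightarrow> (('a \<Rightarrow> complex) \<Rightarrow> ('a \<Rightarrow> complex)) \<Rightarrow> bool" where
  "is_L_multiplier M I u v \<sigma> T \<longleftrightarrow>
     (\<forall>f\<in>L2 M. T f \<in> L2 M \<and>
        (\<lambda>n. L2_norm M (\<lambda>x. T f x - partial_series I
               (\<lambda>\<xi> y. \<sigma> \<xi> * L_fourier M v f \<xi> * u \<xi> y) n x)) \<longlonglongrightarrow> 0)"

definition L2_linear :: "'a measure \<Rightarrow> (('a \<Rightarrow> complex) \<Rightarrow> ('a \<Rightarrow> complex)) \<Rightarrow> bool" where
  "L2_linear M K \<longleftrightarrow> (\<forall>f\<in>L2 M. K f \<in> L2 M) \<and>
     (\<forall>f\<in>L2 M. \<forall>g\<in>L2 M. \<forall>a::complex.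
        L2_norm M (\<lambda>x. K (\<lambda>y. a * f y + g y) x - (a * K f x + K g x)) = 0)"

definition L2_bounded :: "'a measure \<Rightarrow> (('a \<Rightarrow> complex) \<Rightarrow> ('a \<Rightarrow> complex)) \<Rightarrow> bool" where
  "L2_bounded M T \<longleftrightarrow> L2_linear M T \<and>
     (\<exists>B. \<forall>f\<in>L2 M. L2_norm M (T f) \<le> B * L2_norm M f)"

definition L2_rank_le :: "'a measure \<Rightarrow> nat \<Rightarrow> (('a \<Rightarrow> complex) \<Rightarrow> ('a \<Rightarrow> complex)) \<Rightarrow> bool" where
  "L2_rank_le M n K \<longleftrightarrow> L2_linear M K \<and>
     (\<exists>g::nat \<Rightarrow> 'a \<Rightarrow> complex. (\<forall>j<n. g j \<in> L2 M) \<and>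
        (\<forall>f\<in>L2 M. \<exists>c::nat \<Rightarrow> complex.
            L2_norm M (\<lambda>x. K f x - (\<Sum>j<n. c j * g j x)) = 0))"

text \<open>Singular values (approximation numbers), indexed from 0:
  s_n(T) = inf { ||T - K|| : rank K <= n }.\<close>
definition singular_value :: "'a measure \<Rightarrow> (('a \<Rightarrow> complex) \<Rightarrow> ('a \<Rightarrow> complex)) \<Rightarrow> nat \<Rightarrow> real" where
  "singular_value M T n = Inf {B. B \<ge> 0 \<and> (\<exists>K. L2_rank_le M n K \<and>
       (\<forall>f\<in>L2 M. L2_norm M (\<lambda>x. T f x - K f x) \<le> B * L2_norm M f))}"

definition schatten_class :: "'a measure \<Rightarrow> real \<Rightarrow> (('a \<Rightarrow> complex) \<Rightarrow> ('a \<Rightarrow> complex)) \<Rightarrow> bool" where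
  "schatten_class M r T \<longleftrightarrow> L2_bounded M T \<and> summable (\<lambda>n. (singular_value M T n) powr r)"

definition japanese_bracket :: "real \<Rightarrow> complex \<Rightarrow> real" where
  "japanese_bracket m lam = (1 + (cmod lam)\<^sup>2) powr (1 / (2 * m))"

end

theory Submission
  imports Defs
begin

(* Since u_xi and v_xi are unit vectors with (u_xi, v_xi) = 1, they agree almost everywhere,
   so both systems are orthonormal and T acts diagonally with symbol
   sigma(xi) = (1 - lambda_xi)^(-s/m), of modulus (1 + |lambda_xi|)^(-s/m).
   Truncating T to the finitely many xi with |sigma(xi)| > t leaves, by Bessel's inequality,
   an error of norm at most t; hence s_n(T) <= t as soon as there are at most n such xi.
   For s0 > 0 put p = s0/s < r: then |sigma(xi)|^p <= <xi>^(-s0), which has a finite sum S,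
   so by Chebyshev's counting argument s_n(T) <= ((S + 1)/n)^(1/p), and this is r-summable
   because r/p > 1. For s0 <= 0 the summability hypothesis forces the index set to be finite. *)

section \<open>The space L2\<close>

lemma borel_measurable_cnj [measurable]:
  "f \<in> borel_measurable M \<Longrightarrow> (\<lambda>x. cnj (f x)) \<in> borel_measurable M"
  by (rule borel_measurable_continuous_on[where f = cnj]) (auto intro: continuous_on_id)

lemma L2_memI:
  "f \<in> borel_measurable M \<Longrightarrow> integrable M (\<lambda>x. (cmod (f x))\<^sup>2) \<Longrightarrow> f \<in> L2 M"
  by (simp add: L2_def)

lemma L2_borel_measurable [measurable_dest]: "f \<in> L2 M \<Longrightarrow> f \<in> borel_measurable M"
  by (simp add: L2_def)

lemma L2_integrable_norm_sq: "f \<in> L2 M \<Longrightarrow> integrable M (\<lambda>x. (cmod (f x))\<^sup>2)"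
  by (simp add: L2_def)

lemma L2_inner_integrable:
  assumes "f \<in> L2 M" "g \<in> L2 M"
  shows "integrable M (\<lambda>x. f x * cnj (g x))"
proof (rule Bochner_Integration.integrable_bound)
  show "integrable M (\<lambda>x. (cmod (f x))\<^sup>2 + (cmod (g x))\<^sup>2)"
    using assms by (simp add: L2_integrable_norm_sq)
  show "(\<lambda>x. f x * cnj (g x)) \<in> borel_measurable M"
    using assms by measurable
  have "cmod (f x) * cmod (g x) \<le> (cmod (f x))\<^sup>2 + (cmod (g x))\<^sup>2" for x
    using sum_squares_bound[of "cmod (f x)" "cmod (g x)"]
      mult_nonneg_nonneg[OF norm_ge_zero norm_ge_zero, of "f x" "g x"] by linarith
  then show "AE x in M. norm (f x * cnj (g x)) \<le> norm ((cmod (f x))\<^sup>2 + (cmod (g x))\<^sup>2)"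
    by (simp add: norm_mult)
qed

lemma L2_zero: "(\<lambda>x. 0) \<in> L2 M"
  by (rule L2_memI) auto

lemma L2_add:
  assumes "f \<in> L2 M" "g \<in> L2 M"
  shows "(\<lambda>x. f x + g x) \<in> L2 M"
proof (rule L2_memI)
  show "(\<lambda>x. f x + g x) \<in> borel_measurable M"
    using assms by measurable
  show "integrable M (\<lambda>x. (cmod (f x + g x))\<^sup>2)"
  proof (rule Bochner_Integration.integrable_bound)
    show "integrable M (\<lambda>x. 2 * (cmod (f x))\<^sup>2 + 2 * (cmod (g x))\<^sup>2)"
      using assms by (simp add: L2_integrable_norm_sq)
    show "(\<lambda>x. (cmod (f x + g x))\<^sup>2) \<in> borel_measurable M"
      using assms by measurable
    have "(cmod (f x + g x))\<^sup>2 \<le> 2 * (cmod (f x))\<^sup>2 + 2 * (cmod (g x))\<^sup>2" for x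
    proof -
      have "(cmod (f x + g x))\<^sup>2 \<le> (cmod (f x) + cmod (g x))\<^sup>2"
        by (intro power_mono norm_triangle_ineq) simp
      also have "\<dots> \<le> 2 * (cmod (f x))\<^sup>2 + 2 * (cmod (g x))\<^sup>2"
        using sum_squares_bound[of "cmod (f x)" "cmod (g x)"] by (simp add: power2_sum)
      finally show ?thesis .
    qed
    then show "AE x in M. norm ((cmod (f x + g x))\<^sup>2) \<le> norm (2 * (cmod (f x))\<^sup>2 + 2 * (cmod (g x))\<^sup>2)"
      by simp
  qed
qed

lemma L2_mult:
  assumes "f \<in> L2 M"
  shows "(\<lambda>x. c * f x) \<in> L2 M"
proof (rule L2_memI)
  show "(\<lambda>x. c * f x) \<in> borel_measurable M"
    using assms by measurable
  show "integrable M (\<lambda>x. (cmod (c * f x))\<^sup>2)"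
    using assms by (simp add: L2_integrable_norm_sq norm_mult power_mult_distrib)
qed

lemma L2_diff:
  assumes "f \<in> L2 M" "g \<in> L2 M"
  shows "(\<lambda>x. f x - g x) \<in> L2 M"
  using L2_add[OF assms(1) L2_mult[OF assms(2), of "-1"]] by simp

lemma L2_sum:
  "(\<And>i. i \<in> G \<Longrightarrow> w i \<in> L2 M) \<Longrightarrow> (\<lambda>x. \<Sum>i\<in>G. c i * w i x) \<in> L2 M"
  by (induction G rule: infinite_finite_induct) (auto simp: L2_zero L2_add L2_mult)

lemma L2_norm_nonneg: "0 \<le> L2_norm M f"
  by (simp add: L2_norm_def)

lemma L2_norm_sq: "(L2_norm M f)\<^sup>2 = (\<integral>x. (cmod (f x))\<^sup>2 \<partial>M)"
  by (simp add: L2_norm_def)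

lemma L2_norm_zero: "L2_norm M (\<lambda>x. 0) = 0"
  by (simp add: L2_norm_def)

lemma L2_norm_mult: "L2_norm M (\<lambda>x. c * f x) = cmod c * L2_norm M f"
  by (simp add: L2_norm_def norm_mult power_mult_distrib real_sqrt_mult)

lemma L2_norm_eq_0_AE:
  assumes "f \<in> L2 M" "L2_norm M f = 0"
  shows "AE x in M. f x = 0"
proof -
  have "(\<integral>x. (cmod (f x))\<^sup>2 \<partial>M) = 0"
    using assms(2) by (simp add: L2_norm_def)
  then have "AE x in M. (cmod (f x))\<^sup>2 = 0"
    by (subst (asm) integral_nonneg_eq_0_iff_AE[OF L2_integrable_norm_sq[OF assms(1)]]) auto
  then show ?thesis by simp
qed

lemma L2_inner_cnj: "cnj (L2_inner M f g) = L2_inner M g f"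
  unfolding L2_inner_def
  by (simp add: Bochner_Integration.integral_cnj[symmetric] mult.commute
      del: Bochner_Integration.integral_cnj)

lemma L2_norm_sq_eq_Re_inner: "(L2_norm M f)\<^sup>2 = Re (L2_inner M f f)"
proof -
  have "L2_inner M f f = (\<integral>x. complex_of_real ((cmod (f x))\<^sup>2) \<partial>M)"
    unfolding L2_inner_def by (simp only: complex_norm_square)
  then show ?thesis
    by (simp add: L2_norm_sq del: of_real_power)
qed

lemma L2_inner_mult_left: "L2_inner M (\<lambda>x. c * f x) g = c * L2_inner M f g"
  unfolding L2_inner_def by (simp add: mult.assoc)

lemma L2_inner_mult_right: "L2_inner M f (\<lambda>x. c * g x) = cnj c * L2_inner M f g"
  unfolding L2_inner_def by (simp add: mult.assoc mult.left_commute)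

lemma L2_inner_add_left:
  assumes "f \<in> L2 M" "g \<in> L2 M" "h \<in> L2 M"
  shows "L2_inner M (\<lambda>x. f x + g x) h = L2_inner M f h + L2_inner M g h"
  unfolding L2_inner_def using assms
  by (simp add: distrib_right L2_inner_integrable)

lemma L2_inner_diff_left:
  assumes "f \<in> L2 M" "g \<in> L2 M" "h \<in> L2 M"
  shows "L2_inner M (\<lambda>x. f x - g x) h = L2_inner M f h - L2_inner M g h"
  unfolding L2_inner_def using assms
  by (simp add: left_diff_distrib L2_inner_integrable)

lemma L2_inner_diff_right:
  assumes "f \<in> L2 M" "g \<in> L2 M" "h \<in> L2 M"
  shows "L2_inner M h (\<lambda>x. f x - g x) = L2_inner M h f - L2_inner M h g"
  using arg_cong[where f = cnj, OF L2_inner_diff_left[OF assms]] by (simp add: L2_inner_cnj)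

lemma L2_inner_sum_left:
  assumes "\<And>i. i \<in> G \<Longrightarrow> w i \<in> L2 M" "h \<in> L2 M"
  shows "L2_inner M (\<lambda>x. \<Sum>i\<in>G. c i * w i x) h = (\<Sum>i\<in>G. c i * L2_inner M (w i) h)"
proof -
  have "L2_inner M (\<lambda>x. \<Sum>i\<in>G. c i * w i x) h = (\<integral>x. (\<Sum>i\<in>G. c i * (w i x * cnj (h x))) \<partial>M)"
    unfolding L2_inner_def by (simp add: sum_distrib_right mult.assoc)
  also have "\<dots> = (\<Sum>i\<in>G. c i * L2_inner M (w i) h)"
    unfolding L2_inner_def using assms by (simp add: L2_inner_integrable)
  finally show ?thesis .
qed

lemma L2_inner_sum_right:
  assumes "\<And>i. i \<in> G \<Longrightarrow> w i \<in> L2 M" "h \<in> L2 M"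
  shows "L2_inner M h (\<lambda>x. \<Sum>i\<in>G. c i * w i x) = (\<Sum>i\<in>G. cnj (c i) * L2_inner M h (w i))"
  using arg_cong[where f = cnj, OF L2_inner_sum_left[OF assms]] by (simp add: L2_inner_cnj)

lemma L2_inner_cong_AE_right:
  assumes "f \<in> L2 M" "g \<in> L2 M" "g' \<in> L2 M" "AE x in M. g x = g' x"
  shows "L2_inner M f g = L2_inner M f g'"
  unfolding L2_inner_def using assms by (intro integral_cong_AE) auto

lemma L2_norm_sq_diff:
  assumes "f \<in> L2 M" "g \<in> L2 M"
  shows "(L2_norm M (\<lambda>x. f x - g x))\<^sup>2
    = (L2_norm M f)\<^sup>2 + (L2_norm M g)\<^sup>2 - 2 * Re (L2_inner M f g)"
proof -
  have "Re (L2_inner M g f) = Re (L2_inner M f g)"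
    by (metis L2_inner_cnj cnj.sel(1))
  then show ?thesis
    using assms by (simp add: L2_norm_sq_eq_Re_inner L2_inner_diff_left L2_inner_diff_right L2_diff)
qed

lemma L2_norm_sq_add:
  assumes "f \<in> L2 M" "g \<in> L2 M"
  shows "(L2_norm M (\<lambda>x. f x + g x))\<^sup>2
    = (L2_norm M f)\<^sup>2 + (L2_norm M g)\<^sup>2 + 2 * Re (L2_inner M f g)"
  using L2_norm_sq_diff[OF assms(1) L2_mult[OF assms(2), of "-1"]]
    L2_norm_mult[of M "-1" g] L2_inner_mult_right[of M f "-1" g] by simp

lemma L2_Cauchy_Schwarz:
  assumes f: "f \<in> L2 M" and g: "g \<in> L2 M"
  shows "cmod (L2_inner M f g) \<le> L2_norm M f * L2_norm M g"
proof (cases "L2_norm M g = 0")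
  case True
  then have "AE x in M. g x = 0"
    by (rule L2_norm_eq_0_AE[OF g])
  then have "L2_inner M f g = L2_inner M f (\<lambda>x. 0)"
    by (rule L2_inner_cong_AE_right[OF f g L2_zero])
  then show ?thesis
    by (simp add: L2_inner_def True)
next
  case False
  define p where "p = L2_inner M f g"
  define n where "n = (L2_norm M g)\<^sup>2"
  have n: "0 < n"
    using False L2_norm_nonneg[of M g] by (simp add: n_def)
  define a where "a = p / complex_of_real n"
  have "0 \<le> (L2_norm M (\<lambda>x. f x - a * g x))\<^sup>2"
    by simp
  also have "\<dots> = (L2_norm M f)\<^sup>2 + (cmod a)\<^sup>2 * n - 2 * Re (cnj a * p)"
    using L2_norm_sq_diff[OF f L2_mult[OF g]]
    by (simp add: L2_norm_mult L2_inner_mult_right power_mult_distrib n_def p_def)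
  also have "(cmod a)\<^sup>2 * n = (cmod p)\<^sup>2 / n"
    using n by (simp add: a_def norm_divide power_divide power2_eq_square)
  also have "Re (cnj a * p) = (cmod p)\<^sup>2 / n"
    using n by (simp add: a_def complex_norm_square[symmetric] mult.commute del: of_real_power)
  finally have "(cmod p)\<^sup>2 \<le> (L2_norm M f * L2_norm M g)\<^sup>2"
    using n by (simp add: n_def power_mult_distrib field_simps)
  then show ?thesis
    unfolding p_def by (rule power2_le_imp_le) (simp add: L2_norm_nonneg)
qed

lemma L2_norm_triangle:
  assumes "f \<in> L2 M" "g \<in> L2 M"
  shows "L2_norm M (\<lambda>x. f x + g x) \<le> L2_norm M f + L2_norm M g"
proof (rule power2_le_imp_le)
  have "Re (L2_inner M f g) \<le> L2_norm M f * L2_norm M g"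
    using complex_Re_le_cmod L2_Cauchy_Schwarz[OF assms] by (rule order_trans)
  then show "(L2_norm M (\<lambda>x. f x + g x))\<^sup>2 \<le> (L2_norm M f + L2_norm M g)\<^sup>2"
    using assms by (simp add: L2_norm_sq_add power2_sum)
  show "0 \<le> L2_norm M f + L2_norm M g"
    by (simp add: L2_norm_nonneg)
qed

lemma L2_norm_diff_le:
  assumes "f \<in> L2 M" "g \<in> L2 M"
  shows "L2_norm M (\<lambda>x. f x - g x) \<le> L2_norm M f + L2_norm M g"
  using L2_norm_triangle[OF assms(1) L2_mult[OF assms(2), of "-1"]] L2_norm_mult[of M "-1" g]
  by simp

section \<open>Orthonormal systems in L2\<close>

definition L2_orthonormal :: "'a measure \<Rightarrow> nat set \<Rightarrow> (nat \<Rightarrow> 'a \<Rightarrow> complex) \<Rightarrow> bool" where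
  "L2_orthonormal M I w \<longleftrightarrow> (\<forall>\<xi>\<in>I. w \<xi> \<in> L2 M) \<and>
     (\<forall>\<xi>\<in>I. \<forall>\<eta>\<in>I. L2_inner M (w \<xi>) (w \<eta>) = (if \<xi> = \<eta> then 1 else 0))"

lemma L2_orthonormal_L2: "L2_orthonormal M I w \<Longrightarrow> \<xi> \<in> I \<Longrightarrow> w \<xi> \<in> L2 M"
  by (simp add: L2_orthonormal_def)

lemma L2_AE_eq_if_inner_eq_1:
  assumes "f \<in> L2 M" "g \<in> L2 M" "L2_norm M f = 1" "L2_norm M g = 1" "L2_inner M f g = 1"
  shows "AE x in M. f x = g x"
proof -
  have "L2_norm M (\<lambda>x. f x - g x) = 0"
    using L2_norm_sq_diff[OF assms(1,2)] assms(3-5) by simp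
  then have "AE x in M. f x - g x = 0"
    by (rule L2_norm_eq_0_AE[OF L2_diff[OF assms(1,2)]])
  then show ?thesis
    by simp
qed

lemma L2_orthonormal_if_biorthonormal:
  assumes u_L2: "\<forall>\<xi>\<in>I. u \<xi> \<in> L2 M" and v_L2: "\<forall>\<xi>\<in>I. v \<xi> \<in> L2 M"
    and u_norm: "\<forall>\<xi>\<in>I. L2_norm M (u \<xi>) = 1" and v_norm: "\<forall>\<xi>\<in>I. L2_norm M (v \<xi>) = 1"
    and biorth: "\<forall>\<xi>\<in>I. \<forall>\<eta>\<in>I. L2_inner M (u \<xi>) (v \<eta>) = (if \<xi> = \<eta> then 1 else 0)"
  shows "L2_orthonormal M I u" "L2_orthonormal M I v"
proof -
  have uv: "AE x in M. u \<xi> x = v \<xi> x" if "\<xi> \<in> I" for \<xi>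
    using that assms by (intro L2_AE_eq_if_inner_eq_1) auto
  have "L2_inner M (u \<xi>) (u \<eta>) = L2_inner M (u \<xi>) (v \<eta>)" if "\<xi> \<in> I" "\<eta> \<in> I" for \<xi> \<eta>
    using that u_L2 v_L2 uv by (intro L2_inner_cong_AE_right) auto
  then show "L2_orthonormal M I u"
    using u_L2 biorth by (simp add: L2_orthonormal_def)
  have "L2_inner M (v \<eta>) (v \<xi>) = L2_inner M (v \<eta>) (u \<xi>)" if "\<xi> \<in> I" "\<eta> \<in> I" for \<xi> \<eta>
    using that u_L2 v_L2 uv by (intro L2_inner_cong_AE_right) (auto intro: AE_symmetric)
  then have "L2_inner M (v \<xi>) (v \<eta>) = L2_inner M (u \<xi>) (v \<eta>)" if "\<xi> \<in> I" "\<eta> \<in> I" for \<xi> \<eta>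
    using that by (metis L2_inner_cnj)
  then show "L2_orthonormal M I v"
    using v_L2 biorth by (simp add: L2_orthonormal_def)
qed

lemma L2_inner_orthonormal_sum:
  assumes "L2_orthonormal M I w" "finite G" "G \<subseteq> I" "\<eta> \<in> G"
  shows "L2_inner M (w \<eta>) (\<lambda>x. \<Sum>\<xi>\<in>G. c \<xi> * w \<xi> x) = cnj (c \<eta>)"
proof -
  have "L2_inner M (w \<eta>) (\<lambda>x. \<Sum>\<xi>\<in>G. c \<xi> * w \<xi> x)
      = (\<Sum>\<xi>\<in>G. cnj (c \<xi>) * L2_inner M (w \<eta>) (w \<xi>))"
    using assms by (intro L2_inner_sum_right) (auto simp: L2_orthonormal_L2)
  also have "\<dots> = (\<Sum>\<xi>\<in>G. if \<eta> = \<xi> then cnj (c \<xi>) else 0)"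
    using assms by (intro sum.cong) (auto simp: L2_orthonormal_def subset_iff)
  finally show ?thesis
    using assms by simp
qed

lemma L2_norm_sq_orthonormal_sum:
  assumes "L2_orthonormal M I w" "finite G" "G \<subseteq> I"
  shows "(L2_norm M (\<lambda>x. \<Sum>\<xi>\<in>G. c \<xi> * w \<xi> x))\<^sup>2 = (\<Sum>\<xi>\<in>G. (cmod (c \<xi>))\<^sup>2)"
proof -
  have "L2_inner M (\<lambda>x. \<Sum>\<xi>\<in>G. c \<xi> * w \<xi> x) (\<lambda>x. \<Sum>\<xi>\<in>G. c \<xi> * w \<xi> x)
      = (\<Sum>\<eta>\<in>G. c \<eta> * cnj (c \<eta>))"
    using assms by (simp add: L2_inner_sum_left L2_sum L2_orthonormal_L2 subset_iff
        L2_inner_orthonormal_sum)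
  then show ?thesis
    by (simp add: L2_norm_sq_eq_Re_inner complex_norm_square[symmetric] del: of_real_power)
qed

lemma L2_Bessel_inequality:
  assumes "L2_orthonormal M I w" "finite G" "G \<subseteq> I" "f \<in> L2 M"
  shows "(\<Sum>\<xi>\<in>G. (cmod (L2_inner M f (w \<xi>)))\<^sup>2) \<le> (L2_norm M f)\<^sup>2"
proof -
  define c where "c \<xi> = L2_inner M f (w \<xi>)" for \<xi>
  define S where "S = (\<lambda>x. \<Sum>\<xi>\<in>G. c \<xi> * w \<xi> x)"
  have S: "S \<in> L2 M"
    using assms unfolding S_def by (intro L2_sum) (auto simp: L2_orthonormal_L2)
  have "L2_inner M f S = (\<Sum>\<xi>\<in>G. cnj (c \<xi>) * L2_inner M f (w \<xi>))"
    unfolding S_def using assms by (intro L2_inner_sum_right) (auto simp: L2_orthonormal_L2)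
  also have "\<dots> = (\<Sum>\<xi>\<in>G. c \<xi> * cnj (c \<xi>))"
    by (simp add: c_def mult.commute)
  finally have "Re (L2_inner M f S) = (\<Sum>\<xi>\<in>G. (cmod (c \<xi>))\<^sup>2)"
    by (simp add: complex_norm_square[symmetric] del: of_real_power)
  moreover have "(L2_norm M S)\<^sup>2 = (\<Sum>\<xi>\<in>G. (cmod (c \<xi>))\<^sup>2)"
    unfolding S_def by (rule L2_norm_sq_orthonormal_sum[OF assms(1-3)])
  moreover have "0 \<le> (L2_norm M (\<lambda>x. f x - S x))\<^sup>2"
    by simp
  ultimately show ?thesis
    using L2_norm_sq_diff[OF assms(4) S] by (simp add: c_def)
qed

section \<open>Truncated L-Fourier multipliers\<close>

definition trunc_multiplier ::
  "'a measure \<Rightarrow> (nat \<Rightarrow> 'a \<Rightarrow> complex) \<Rightarrow> (nat \<Rightarrow> 'a \<Rightarrow> complex) \<Rightarrow> (nat \<Rightarrow> complex)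
     \<Rightarrow> nat set \<Rightarrow> ('a \<Rightarrow> complex) \<Rightarrow> 'a \<Rightarrow> complex" where
  "trunc_multiplier M u v \<sigma> F f = (\<lambda>x. \<Sum>\<xi>\<in>F. \<sigma> \<xi> * L_fourier M v f \<xi> * u \<xi> x)"

lemma is_L_multiplier_iff_trunc:
  "is_L_multiplier M I u v \<sigma> T \<longleftrightarrow> (\<forall>f\<in>L2 M. T f \<in> L2 M \<and>
     (\<lambda>n. L2_norm M (\<lambda>x. T f x - trunc_multiplier M u v \<sigma> (I \<inter> {..<n}) f x)) \<longlonglongrightarrow> 0)"
  by (simp add: is_L_multiplier_def partial_series_def trunc_multiplier_def)

lemma trunc_multiplier_L2:
  "(\<And>\<xi>. \<xi> \<in> F \<Longrightarrow> u \<xi> \<in> L2 M) \<Longrightarrow> trunc_multiplier M u v \<sigma> F f \<in> L2 M"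
  unfolding trunc_multiplier_def by (rule L2_sum)

lemma L_fourier_linear:
  assumes "v \<xi> \<in> L2 M" "f \<in> L2 M" "g \<in> L2 M"
  shows "L_fourier M v (\<lambda>y. a * f y + g y) \<xi> = a * L_fourier M v f \<xi> + L_fourier M v g \<xi>"
  using assms by (simp add: L_fourier_def L2_inner_add_left L2_mult L2_inner_mult_left)

lemma trunc_multiplier_linear_combination:
  assumes "\<And>\<xi>. \<xi> \<in> F \<Longrightarrow> v \<xi> \<in> L2 M" "f \<in> L2 M" "g \<in> L2 M"
  shows "trunc_multiplier M u v \<sigma> F (\<lambda>y. a * f y + g y) x
    = a * trunc_multiplier M u v \<sigma> F f x + trunc_multiplier M u v \<sigma> F g x"
proof -
  have "\<sigma> \<xi> * L_fourier M v (\<lambda>y. a * f y + g y) \<xi> * u \<xi> x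
      = a * (\<sigma> \<xi> * L_fourier M v f \<xi> * u \<xi> x) + \<sigma> \<xi> * L_fourier M v g \<xi> * u \<xi> x"
    if "\<xi> \<in> F" for \<xi>
    using assms that by (simp only: L_fourier_linear) (simp add: algebra_simps)
  then have "trunc_multiplier M u v \<sigma> F (\<lambda>y. a * f y + g y) x
      = (\<Sum>\<xi>\<in>F. a * (\<sigma> \<xi> * L_fourier M v f \<xi> * u \<xi> x) + \<sigma> \<xi> * L_fourier M v g \<xi> * u \<xi> x)"
    unfolding trunc_multiplier_def by (rule sum.cong[OF refl])
  then show ?thesis
    by (simp add: trunc_multiplier_def sum.distrib sum_distrib_left)
qed

lemma trunc_multiplier_L2_linear:
  assumes "\<forall>\<xi>\<in>F. u \<xi> \<in> L2 M" "\<forall>\<xi>\<in>F. v \<xi> \<in> L2 M"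
  shows "L2_linear M (trunc_multiplier M u v \<sigma> F)"
  using assms
  by (simp add: L2_linear_def trunc_multiplier_L2 trunc_multiplier_linear_combination L2_norm_zero)

lemma L2_linear_strong_limit:
  assumes T_L2: "\<And>f. f \<in> L2 M \<Longrightarrow> T f \<in> L2 M"
    and K_L2: "\<And>n f. f \<in> L2 M \<Longrightarrow> K n f \<in> L2 M"
    and K_linear: "\<And>n f g a x. f \<in> L2 M \<Longrightarrow> g \<in> L2 M \<Longrightarrow>
        K n (\<lambda>y. a * f y + g y) x = a * K n f x + K n g x"
    and lim: "\<And>f. f \<in> L2 M \<Longrightarrow> (\<lambda>n. L2_norm M (\<lambda>x. T f x - K n f x)) \<longlonglongrightarrow> 0"
  shows "L2_linear M T"
  unfolding L2_linear_def
proof (intro conjI ballI allI)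
  fix f g a assume f: "f \<in> L2 M" and g: "g \<in> L2 M"
  define h where "h = (\<lambda>y. a * f y + g y)"
  have h: "h \<in> L2 M"
    unfolding h_def using f g by (intro L2_add L2_mult)
  define e where "e k n = L2_norm M (\<lambda>x. T k x - K n k x)" for k n
  have err_L2: "(\<lambda>x. T k x - K n k x) \<in> L2 M" if "k \<in> L2 M" for k n
    using that by (intro L2_diff T_L2 K_L2)
  let ?D = "\<lambda>x. T h x - (a * T f x + T g x)"
  have bound: "L2_norm M ?D \<le> e h n + (cmod a * e f n + e g n)" for n
  proof -
    have "?D x = (T h x - K n h x) - (a * (T f x - K n f x) + (T g x - K n g x))" for x
      using K_linear[OF f g, of n a x] unfolding h_def by (simp add: algebra_simps)
    then have "L2_norm M ?D
        = L2_norm M (\<lambda>x. (T h x - K n h x) - (a * (T f x - K n f x) + (T g x - K n g x)))"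
      by (simp only:)
    also have "\<dots> \<le> e h n + L2_norm M (\<lambda>x. a * (T f x - K n f x) + (T g x - K n g x))"
      unfolding e_def
      by (rule L2_norm_diff_le[OF err_L2[OF h] L2_add[OF L2_mult[OF err_L2[OF f]] err_L2[OF g]]])
    also have "\<dots> \<le> e h n + (cmod a * e f n + e g n)"
      using L2_norm_triangle[OF L2_mult[OF err_L2[OF f]] err_L2[OF g]]
      by (simp add: e_def L2_norm_mult)
    finally show ?thesis .
  qed
  have "(\<lambda>n. e h n + (cmod a * e f n + e g n)) \<longlonglongrightarrow> 0"
    unfolding e_def using f g h by (intro tendsto_add_zero tendsto_mult_right_zero lim)
  then have "L2_norm M ?D \<le> 0"
    using bound by (intro LIMSEQ_le_const) blast+
  then show "L2_norm M (\<lambda>x. T (\<lambda>y. a * f y + g y) x - (a * T f x + T g x)) = 0"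
    using L2_norm_nonneg[of M ?D] by (simp add: h_def)
qed (rule T_L2)

lemma is_L_multiplier_L2_linear:
  assumes "\<forall>\<xi>\<in>I. u \<xi> \<in> L2 M" "\<forall>\<xi>\<in>I. v \<xi> \<in> L2 M" "is_L_multiplier M I u v \<sigma> T"
  shows "L2_linear M T"
  using assms unfolding is_L_multiplier_iff_trunc
  by (intro L2_linear_strong_limit[where K = "\<lambda>n. trunc_multiplier M u v \<sigma> (I \<inter> {..<n})"]
      trunc_multiplier_L2 trunc_multiplier_linear_combination) auto

lemma trunc_multiplier_norm_le:
  assumes ONu: "L2_orthonormal M I u" and ONv: "L2_orthonormal M I v"
    and G: "finite G" "G \<subseteq> I" and f: "f \<in> L2 M"
    and t: "0 \<le> t" "\<And>\<xi>. \<xi> \<in> G \<Longrightarrow> cmod (\<sigma> \<xi>) \<le> t"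
  shows "L2_norm M (trunc_multiplier M u v \<sigma> G f) \<le> t * L2_norm M f"
proof (rule power2_le_imp_le)
  have "(L2_norm M (trunc_multiplier M u v \<sigma> G f))\<^sup>2
      = (\<Sum>\<xi>\<in>G. (cmod (\<sigma> \<xi> * L_fourier M v f \<xi>))\<^sup>2)"
    unfolding trunc_multiplier_def by (rule L2_norm_sq_orthonormal_sum[OF ONu G])
  also have "\<dots> \<le> (\<Sum>\<xi>\<in>G. t\<^sup>2 * (cmod (L2_inner M f (v \<xi>)))\<^sup>2)"
  proof (rule sum_mono)
    fix \<xi> assume "\<xi> \<in> G"
    then have "(cmod (\<sigma> \<xi>))\<^sup>2 \<le> t\<^sup>2"
      using t by (intro power_mono) auto
    then show "(cmod (\<sigma> \<xi> * L_fourier M v f \<xi>))\<^sup>2 \<le> t\<^sup>2 * (cmod (L2_inner M f (v \<xi>)))\<^sup>2"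
      by (simp add: L_fourier_def norm_mult power_mult_distrib mult_right_mono)
  qed
  also have "\<dots> \<le> t\<^sup>2 * (L2_norm M f)\<^sup>2"
    using L2_Bessel_inequality[OF ONv G f] by (simp add: sum_distrib_left[symmetric] mult_left_mono)
  finally show "(L2_norm M (trunc_multiplier M u v \<sigma> G f))\<^sup>2 \<le> (t * L2_norm M f)\<^sup>2"
    by (simp add: power_mult_distrib)
  show "0 \<le> t * L2_norm M f"
    using t by (simp add: L2_norm_nonneg)
qed

lemma multiplier_trunc_error_le:
  assumes ONu: "L2_orthonormal M I u" and ONv: "L2_orthonormal M I v"
    and T: "is_L_multiplier M I u v \<sigma> T"
    and F: "finite F" "F \<subseteq> I" and t: "0 \<le> t" "\<And>\<xi>. \<xi> \<in> I - F \<Longrightarrow> cmod (\<sigma> \<xi>) \<le> t"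
    and f: "f \<in> L2 M"
  shows "L2_norm M (\<lambda>x. T f x - trunc_multiplier M u v \<sigma> F f x) \<le> t * L2_norm M f"
proof -
  let ?K = "\<lambda>G. trunc_multiplier M u v \<sigma> G f"
  have K_L2: "?K G \<in> L2 M" if "G \<subseteq> I" for G
    using ONu that by (intro trunc_multiplier_L2) (auto simp: L2_orthonormal_L2)
  have Tf: "T f \<in> L2 M" and lim: "(\<lambda>n. L2_norm M (\<lambda>x. T f x - ?K (I \<inter> {..<n}) x)) \<longlonglongrightarrow> 0"
    using T f by (auto simp: is_L_multiplier_iff_trunc)
  obtain N where N: "F \<subseteq> {..<N}"
    using finite_nat_bounded[OF F(1)] by blast
  have "L2_norm M (\<lambda>x. T f x - ?K F x)
      \<le> L2_norm M (\<lambda>x. T f x - ?K (I \<inter> {..<n}) x) + t * L2_norm M f" if "N \<le> n" for n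
  proof -
    define G where "G = I \<inter> {..<n} - F"
    have "?K (I \<inter> {..<n}) x = ?K G x + ?K F x" for x
      using N that F unfolding G_def trunc_multiplier_def by (subst sum.subset_diff[of F]) auto
    then have "L2_norm M (\<lambda>x. T f x - ?K F x) = L2_norm M (\<lambda>x. (T f x - ?K (I \<inter> {..<n}) x) + ?K G x)"
      by simp
    also have "\<dots> \<le> L2_norm M (\<lambda>x. T f x - ?K (I \<inter> {..<n}) x) + L2_norm M (?K G)"
      by (intro L2_norm_triangle L2_diff Tf K_L2) (auto simp: G_def)
    also have "L2_norm M (?K G) \<le> t * L2_norm M f"
      using F t by (intro trunc_multiplier_norm_le[OF ONu ONv _ _ f]) (auto simp: G_def)
    finally show ?thesis
      by simp
  qed
  moreover have "(\<lambda>n. L2_norm M (\<lambda>x. T f x - ?K (I \<inter> {..<n}) x) + t * L2_norm M f)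
      \<longlonglongrightarrow> t * L2_norm M f"
    using tendsto_add[OF lim tendsto_const] by simp
  ultimately show ?thesis
    by (intro LIMSEQ_le_const) blast+
qed

lemma trunc_multiplier_rank_le:
  assumes u: "\<forall>\<xi>\<in>F. u \<xi> \<in> L2 M" and v: "\<forall>\<xi>\<in>F. v \<xi> \<in> L2 M"
    and F: "finite F" "card F \<le> n"
  shows "L2_rank_le M n (trunc_multiplier M u v \<sigma> F)"
  unfolding L2_rank_le_def
proof (intro conjI trunc_multiplier_L2_linear u v)
  obtain h where h: "bij_betw h {0..<card F} F"
    using ex_bij_betw_nat_finite[OF F(1)] by blast
  define g where "g j = (if j < card F then u (h j) else (\<lambda>x. 0))" for j
  have hF: "h j \<in> F" if "j < card F" for j
    using h that by (auto simp: bij_betw_def)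
  show "\<exists>g. (\<forall>j<n. g j \<in> L2 M) \<and>
      (\<forall>f\<in>L2 M. \<exists>c. L2_norm M (\<lambda>x. trunc_multiplier M u v \<sigma> F f x - (\<Sum>j<n. c j * g j x)) = 0)"
  proof (intro exI[of _ g] conjI allI impI ballI)
    show "g j \<in> L2 M" for j
      using hF u by (simp add: g_def L2_zero)
  next
    fix f
    define c where "c j = (if j < card F then \<sigma> (h j) * L_fourier M v f (h j) else 0)" for j
    have "(\<Sum>j<n. c j * g j x) = trunc_multiplier M u v \<sigma> F f x" for x
    proof -
      have "(\<Sum>j<n. c j * g j x) = (\<Sum>j\<in>{0..<card F}. c j * g j x)"
        using F(2) by (intro sum.mono_neutral_right) (auto simp: c_def)
      also have "\<dots> = (\<Sum>j\<in>{0..<card F}. \<sigma> (h j) * L_fourier M v f (h j) * u (h j) x)"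
        by (simp add: c_def g_def)
      also have "\<dots> = trunc_multiplier M u v \<sigma> F f x"
        unfolding trunc_multiplier_def by (rule sum.reindex_bij_betw[OF h])
      finally show ?thesis .
    qed
    then show "\<exists>c. L2_norm M (\<lambda>x. trunc_multiplier M u v \<sigma> F f x - (\<Sum>j<n. c j * g j x)) = 0"
      by (intro exI[of _ c]) (simp add: L2_norm_zero)
  qed
qed

section \<open>Singular values of multipliers\<close>

lemma singular_value_le_approx_error:
  assumes "L2_rank_le M n K" "0 \<le> t"
    and "\<forall>f\<in>L2 M. L2_norm M (\<lambda>x. T f x - K f x) \<le> t * L2_norm M f"
  shows "0 \<le> singular_value M T n" "singular_value M T n \<le> t"
  unfolding singular_value_def
  by (rule cInf_greatest, use assms in auto)
     (rule cInf_lower, use assms in \<open>auto intro: bdd_belowI[where m = 0]\<close>)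

lemma multiplier_singular_value_le:
  assumes ONu: "L2_orthonormal M I u" and ONv: "L2_orthonormal M I v"
    and T: "is_L_multiplier M I u v \<sigma> T" and t: "0 \<le> t"
    and fin: "finite {\<xi>\<in>I. t < cmod (\<sigma> \<xi>)}" and card: "card {\<xi>\<in>I. t < cmod (\<sigma> \<xi>)} \<le> n"
  shows "0 \<le> singular_value M T n" "singular_value M T n \<le> t"
proof -
  let ?F = "{\<xi>\<in>I. t < cmod (\<sigma> \<xi>)}"
  have "L2_rank_le M n (trunc_multiplier M u v \<sigma> ?F)"
    using ONu ONv fin card by (intro trunc_multiplier_rank_le) (auto simp: L2_orthonormal_L2)
  moreover have "\<forall>f\<in>L2 M. L2_norm M (\<lambda>x. T f x - trunc_multiplier M u v \<sigma> ?F f x) \<le> t * L2_norm M f"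
    using fin t by (intro ballI multiplier_trunc_error_le[OF ONu ONv T]) auto
  ultimately show "0 \<le> singular_value M T n" "singular_value M T n \<le> t"
    using singular_value_le_approx_error t by blast+
qed

lemma multiplier_L2_bounded:
  assumes ONu: "L2_orthonormal M I u" and ONv: "L2_orthonormal M I v"
    and T: "is_L_multiplier M I u v \<sigma> T" and B: "0 \<le> B" "\<And>\<xi>. \<xi> \<in> I \<Longrightarrow> cmod (\<sigma> \<xi>) \<le> B"
  shows "L2_bounded M T"
  unfolding L2_bounded_def
proof (intro conjI exI[of _ B] ballI)
  show "L2_linear M T"
    using ONu ONv T by (intro is_L_multiplier_L2_linear) (auto simp: L2_orthonormal_L2)
  show "L2_norm M (T f) \<le> B * L2_norm M f" if "f \<in> L2 M" for f
    using multiplier_trunc_error_le[OF ONu ONv T finite.emptyI empty_subsetI B(1) _ that] B(2)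
    by (simp add: trunc_multiplier_def)
qed

lemma card_mult_le_infsum:
  fixes g :: "'b \<Rightarrow> real"
  assumes "g summable_on I" "\<And>\<xi>. \<xi> \<in> I \<Longrightarrow> 0 \<le> g \<xi>"
    and "finite A" "A \<subseteq> I" "\<And>\<xi>. \<xi> \<in> A \<Longrightarrow> c \<le> g \<xi>"
  shows "real (card A) * c \<le> infsum g I"
proof -
  have "real (card A) * c \<le> sum g A"
    using assms(5) sum_mono[of A "\<lambda>_. c" g] by simp
  also have "\<dots> \<le> infsum g I"
    using assms by (intro finite_sum_le_infsum) auto
  finally show ?thesis .
qed

lemma summable_on_finite_superlevel:
  fixes g :: "'b \<Rightarrow> real"
  assumes "g summable_on I" "\<And>\<xi>. \<xi> \<in> I \<Longrightarrow> 0 \<le> g \<xi>" "0 < c"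
  shows "finite {\<xi>\<in>I. c \<le> g \<xi>}"
proof (rule ccontr)
  assume "infinite {\<xi>\<in>I. c \<le> g \<xi>}"
  then obtain A where A: "finite A" "card A = nat \<lceil>infsum g I / c\<rceil> + 1" "A \<subseteq> {\<xi>\<in>I. c \<le> g \<xi>}"
    using infinite_arbitrarily_large by blast
  then have "real (card A) * c \<le> infsum g I"
    using assms by (intro card_mult_le_infsum) auto
  moreover have "infsum g I / c < real (card A)"
    using A(2) by linarith
  ultimately show False
    using assms(3) by (simp add: divide_less_eq)
qed

lemma multiplier_singular_value_decay:
  assumes ONu: "L2_orthonormal M I u" and ONv: "L2_orthonormal M I v"
    and T: "is_L_multiplier M I u v \<sigma> T" and p: "0 < p"
    and summable: "(\<lambda>\<xi>. cmod (\<sigma> \<xi>) powr p) summable_on I" and n: "1 \<le> n"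
  shows "0 \<le> singular_value M T n"
    "singular_value M T n \<le> ((infsum (\<lambda>\<xi>. cmod (\<sigma> \<xi>) powr p) I + 1) / n) powr (1 / p)"
proof -
  let ?S = "infsum (\<lambda>\<xi>. cmod (\<sigma> \<xi>) powr p) I"
  define t where "t = ((?S + 1) / n) powr (1 / p)"
  let ?A = "{\<xi>\<in>I. t < cmod (\<sigma> \<xi>)}"
  have S: "0 \<le> ?S"
    by (intro infsum_nonneg) auto
  have t: "0 < t" and tp: "t powr p = (?S + 1) / n"
    using S n p by (simp_all add: t_def powr_powr)
  have "t powr p \<le> cmod (\<sigma> \<xi>) powr p" if "t < cmod (\<sigma> \<xi>)" for \<xi>
    using t p that by (intro powr_mono2) auto
  then have sub: "?A \<subseteq> {\<xi>\<in>I. t powr p \<le> cmod (\<sigma> \<xi>) powr p}"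
    by blast
  have fin: "finite ?A"
    using t by (intro finite_subset[OF sub] summable_on_finite_superlevel[OF summable]) auto
  have "real (card ?A) * t powr p \<le> ?S"
    using summable sub fin by (intro card_mult_le_infsum) auto
  then have "real (card ?A) * (?S + 1) \<le> real n * (?S + 1)"
    using tp n by (simp add: field_simps)
  then have "card ?A \<le> n"
    using S by (simp add: mult_le_cancel_right_pos)
  then show "0 \<le> singular_value M T n" "singular_value M T n \<le> ((?S + 1) / n) powr (1 / p)"
    using multiplier_singular_value_le[OF ONu ONv T less_imp_le[OF t] fin] unfolding t_def by auto
qed

lemma multiplier_schatten_class:
  assumes ONu: "L2_orthonormal M I u" and ONv: "L2_orthonormal M I v"
    and T: "is_L_multiplier M I u v \<sigma> T" and p: "0 < p" "p < r"
    and summable: "(\<lambda>\<xi>. cmod (\<sigma> \<xi>) powr p) summable_on I"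
  shows "schatten_class M r T"
proof -
  define S where "S = infsum (\<lambda>\<xi>. cmod (\<sigma> \<xi>) powr p) I"
  have S: "0 \<le> S"
    unfolding S_def by (intro infsum_nonneg) auto
  have "cmod (\<sigma> \<xi>) \<le> S powr (1 / p)" if "\<xi> \<in> I" for \<xi>
  proof -
    have "cmod (\<sigma> \<xi>) powr p \<le> S"
      unfolding S_def using finite_sum_le_infsum[OF summable, of "{\<xi>}"] that by simp
    then have "(cmod (\<sigma> \<xi>) powr p) powr (1 / p) \<le> S powr (1 / p)"
      using p by (intro powr_mono2) auto
    then show ?thesis
      using p by (simp add: powr_powr)
  qed
  then have "L2_bounded M T"
    by (intro multiplier_L2_bounded[OF ONu ONv T, of "S powr (1 / p)"]) auto
  moreover have "summable (\<lambda>n. singular_value M T n powr r)"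
  proof (rule summable_comparison_test')
    show "summable (\<lambda>n. (S + 1) powr (r / p) * real n powr (- (r / p)))"
      using p by (intro summable_mult) (simp add: summable_real_powr_iff)
    fix n :: nat assume n: "1 \<le> n"
    note sv = multiplier_singular_value_decay[OF ONu ONv T p(1) summable n, folded S_def]
    have "norm (singular_value M T n powr r) \<le> (((S + 1) / n) powr (1 / p)) powr r"
      using p sv by (simp add: powr_mono2)
    also have "\<dots> = ((S + 1) / n) powr (r / p)"
      by (simp add: powr_powr)
    also have "\<dots> = (S + 1) powr (r / p) * real n powr (- (r / p))"
      using S by (simp add: powr_divide powr_minus_divide)
    finally show "norm (singular_value M T n powr r) \<le> (S + 1) powr (r / p) * real n powr (- (r / p))" .
  qed
  ultimately show ?thesis
    by (simp add: schatten_class_def)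
qed

section \<open>The symbol of the Bessel potential\<close>

lemma norm_one_minus_powr_of_real:
  assumes "z \<in> \<real>" "Re z \<le> 0"
  shows "cmod ((1 - z) powr complex_of_real a) = (1 + cmod z) powr a"
proof -
  obtain x where "z = complex_of_real x" "x \<le> 0"
    using assms by (auto elim: Reals_cases)
  then have "1 - z = complex_of_real (1 + cmod z)"
    by simp
  then have "(1 - z) powr complex_of_real a = complex_of_real ((1 + cmod z) powr a)"
    by (simp only:) (rule powr_of_real, simp)
  then show ?thesis
    by simp
qed

lemma japanese_bracket_ge_1: "0 < m \<Longrightarrow> 1 \<le> japanese_bracket m z"
  unfolding japanese_bracket_def by (intro ge_one_powr_ge_zero) auto

lemma one_plus_norm_powr_le_japanese_bracket:
  assumes "0 < m" "0 \<le> q"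
  shows "(1 + cmod z) powr (- q / m) \<le> japanese_bracket m z powr (- q)"
proof -
  have "(1 + cmod z) powr (- q / m) = ((1 + cmod z) powr 2) powr (- q / (2 * m))"
    unfolding powr_powr using assms by simp
  also have "\<dots> = ((1 + cmod z)\<^sup>2) powr (- q / (2 * m))"
    by simp
  also have "\<dots> \<le> (1 + (cmod z)\<^sup>2) powr (- q / (2 * m))"
    using assms by (intro powr_mono2') (auto simp: power2_sum add_pos_nonneg)
  also have "\<dots> = japanese_bracket m z powr (- q)"
    by (simp add: japanese_bracket_def powr_powr)
  finally show ?thesis .
qed

lemma bessel_symbol_powr_summable:
  assumes m: "0 < m" and s0: "0 < s0" and s: "0 < s"
    and summable: "(\<lambda>\<xi>. japanese_bracket m (lam \<xi>) powr (- s0)) summable_on I"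
    and nonpos: "\<forall>\<xi>\<in>I. lam \<xi> \<in> \<real> \<and> Re (lam \<xi>) \<le> 0"
  shows "(\<lambda>\<xi>. cmod ((1 - lam \<xi>) powr complex_of_real (- s / m)) powr (s0 / s)) summable_on I"
proof (rule summable_on_comparison_test[OF summable])
  fix \<xi> assume "\<xi> \<in> I"
  then have "cmod ((1 - lam \<xi>) powr complex_of_real (- s / m)) = (1 + cmod (lam \<xi>)) powr (- s / m)"
    using nonpos by (intro norm_one_minus_powr_of_real) auto
  then have "cmod ((1 - lam \<xi>) powr complex_of_real (- s / m)) powr (s0 / s)
      = (1 + cmod (lam \<xi>)) powr (- s0 / m)"
    using s by (simp add: powr_powr)
  also have "\<dots> \<le> japanese_bracket m (lam \<xi>) powr (- s0)"
    using m s0 by (intro one_plus_norm_powr_le_japanese_bracket) auto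
  finally show "cmod ((1 - lam \<xi>) powr complex_of_real (- s / m)) powr (s0 / s)
      \<le> japanese_bracket m (lam \<xi>) powr (- s0)" .
qed simp

theorem corollary3p9:
  fixes M :: "'a measure"
    and I :: "nat set"
    and m :: real
    and Lop Lstar :: "('a \<Rightarrow> complex) \<Rightarrow> ('a \<Rightarrow> complex)"
    and lam :: "nat \<Rightarrow> complex"
    and u v :: "nat \<Rightarrow> 'a \<Rightarrow> complex"
    and s0 r s :: real
    and T :: "('a \<Rightarrow> complex) \<Rightarrow> ('a \<Rightarrow> complex)"
  assumes m_pos: "m > 0"
    and u_L2: "\<forall>\<xi>\<in>I. u \<xi> \<in> L2 M" and v_L2: "\<forall>\<xi>\<in>I. v \<xi> \<in> L2 M"
    and eig_u: "\<forall>\<xi>\<in>I. AE x in M. Lop (u \<xi>) x = lam \<xi> * u \<xi> x"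
    and eig_v: "\<forall>\<xi>\<in>I. AE x in M. Lstar (v \<xi>) x = cnj (lam \<xi>) * v \<xi> x"
    and u_norm: "\<forall>\<xi>\<in>I. L2_norm M (u \<xi>) = 1"
    and v_norm: "\<forall>\<xi>\<in>I. L2_norm M (v \<xi>) = 1"
    and biorth: "\<forall>\<xi>\<in>I. \<forall>\<eta>\<in>I. L2_inner M (u \<xi>) (v \<eta>) = (if \<xi> = \<eta> then 1 else 0)"
    and basis: "is_L2_basis M I u"
    and s0_summable: "(\<lambda>\<xi>. japanese_bracket m (lam \<xi>) powr (- s0)) summable_on I"
    and positive: "\<forall>\<xi>\<in>I. lam \<xi> \<in> \<real> \<and> Re (lam \<xi>) \<le> 0"
    and r_pos: "0 < r" and r_le1: "r \<le> 1"
    and s_gt: "s > s0 / r"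
    and T_def: "is_L_multiplier M I u v (\<lambda>\<xi>. (1 - lam \<xi>) powr (complex_of_real (- s / m))) T"
  shows "schatten_class M r T"
proof -
  have ONu: "L2_orthonormal M I u" and ONv: "L2_orthonormal M I v"
    using L2_orthonormal_if_biorthonormal[OF u_L2 v_L2 u_norm v_norm biorth] by auto
  obtain p where "0 < p" "p < r"
    "(\<lambda>\<xi>. cmod ((1 - lam \<xi>) powr complex_of_real (- s / m)) powr p) summable_on I"
  proof (cases "0 < s0")
    case True
    then have "0 < s"
      using s_gt divide_pos_pos[OF True r_pos] by linarith
    then have "s0 / s < r"
      using s_gt r_pos by (simp add: field_simps)
    then show ?thesis
      using that[of "s0 / s"] bessel_symbol_powr_summable[OF m_pos True \<open>0 < s\<close> s0_summable positive]
        True \<open>0 < s\<close> by simp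
  next
    case False
    have "1 \<le> japanese_bracket m (lam \<xi>) powr (- s0)" for \<xi>
      using False japanese_bracket_ge_1[OF m_pos] by (intro ge_one_powr_ge_zero) auto
    then have "finite I"
      using summable_on_finite_superlevel[OF s0_summable, of 1] by simp
    then show ?thesis
      using that[of "r / 2"] r_pos by simp
  qed
  then show ?thesis
    using multiplier_schatten_class[OF ONu ONv T_def] by blast
qed

end
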